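(* Let $W_{32,23}$ be the $32\times 32$ matrix $\begin{pmatrix} A & B\\ -B^T & A^T\end{pmatrix}$, where $A$ and $B$ are $16\times 16$ negacirculant matrices with first rows $r_A=(0,1,1,0,-1,1,-1,0,0,0,-1,1,-1,0,1,1)$ and $r_B=(0,1,0,1,1,1,1,-1,0,-1,-1,1,-1,-1,-1,1)$ (a skew-symmetric weighing matrix of order $32$ and weight $23$). Let $C_3(W_{32,23})$ be the ternary code of length $64$ with generator matrix $(I\ \ W_{32,23})$, entries read modulo $3$. Then $A_3(C_3(W_{32,23}))$ contains a $k$-frame for every positive integer $k\ge 3$ that is not of the form $2^{m_1}5^{m_2}7^{m_3}23^{m_4}$ with $m_1,\dots,m_4$ non-negative integers.
   Context: An $N\times N$ negacirculant matrix with first row $(r_0,\dots,r_{N-1})$ is the matrix whose $(i,j)$ entry ($0\le i,j\le N-1$) is $r_{j-i}$ if $j\ge i$ and $-r_{N+j-i}$ if $j<i$. A skew-symmetric weighing matrix of order $n$ and weight $w$ is an $n\times n$ $(0,\pm1)$-matrix $W$ with $W^T=-W$ and $WW^T=wI$. Construction A: with $\rho:\mathbb{Z}_k\to\mathbb{Z}$ sending $0,1,\dots,k-1$ to $0,1,\dots,k-1$, for a $\mathbb{Z}_k$-code $C$ of length $N$ set $A_k(C)=\frac{1}{\sqrt{k}}\{\rho(C)+k\mathbb{Z}^N\}$. A $t$-frame of a lattice in dimension $N$ is a set of $N$ lattice vectors $f_1,\dots,f_N$ with $(f_i,f_j)=t\,\delta_{i,j}$. *)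

theory Defs
  imports Complex_Main
begin

text \<open>Vectors of length N are functions nat => _ vanishing outside {..<N};
  matrices are functions nat => nat => _ read on indices < size.\<close>

definition negacirc :: "nat \<Rightarrow> (nat \<Rightarrow> int) \<Rightarrow> nat \<Rightarrow> nat \<Rightarrow> int" where
  "negacirc N r i j = (if i \<le> j then r (j - i) else - r (N + j - i))"

definition rA :: "int list" where
  "rA = [0,1,1,0,-1,1,-1,0,0,0,-1,1,-1,0,1,1]"

definition rB :: "int list" where
  "rB = [0,1,0,1,1,1,1,-1,0,-1,-1,1,-1,-1,-1,1]"

definition negA :: "nat \<Rightarrow> nat \<Rightarrow> int" where
  "negA = negacirc 16 (\<lambda>k. rA ! k)"

definition negB :: "nat \<Rightarrow> nat \<Rightarrow> int" where
  "negB = negacirc 16 (\<lambda>k. rB ! k)"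

definition W32_23 :: "nat \<Rightarrow> nat \<Rightarrow> int" where
  "W32_23 i j =
     (if i < 16 \<and> j < 16 then negA i j
      else if i < 16 then negB i (j - 16)
      else if j < 16 then - negB j (i - 16)
      else negA (j - 16) (i - 16))"

definition genIW :: "nat \<Rightarrow> nat \<Rightarrow> int" where
  "genIW i j = (if j < 32 then (if i = j then 1 else 0) else W32_23 i (j - 32))"

text \<open>The Z_k-code of length N generated by the n x N integer matrix G (entries read mod k).
  Codewords are represented by their representatives in {0..k-1} (i.e. already as rho(c)).\<close>
definition code_gen :: "int \<Rightarrow> nat \<Rightarrow> nat \<Rightarrow> (nat \<Rightarrow> nat \<Rightarrow> int) \<Rightarrow> (nat \<Rightarrow> int) set" where
  "code_gen k n N G = {c. \<exists>u :: nat \<Rightarrow> int.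
      (\<forall>j<N. c j = (\<Sum>i<n. u i * G i j) mod k) \<and> (\<forall>j\<ge>N. c j = 0)}"

definition C3_W :: "(nat \<Rightarrow> int) set" where
  "C3_W = code_gen 3 32 64 genIW"

definition constrA :: "int \<Rightarrow> nat \<Rightarrow> (nat \<Rightarrow> int) set \<Rightarrow> (nat \<Rightarrow> real) set" where
  "constrA k N C = {x. \<exists>c\<in>C. \<exists>z :: nat \<Rightarrow> int.
      (\<forall>j<N. x j = (of_int (c j) + of_int k * of_int (z j)) / sqrt (of_int k)) \<and>
      (\<forall>j\<ge>N. x j = 0)}"

definition inner_N :: "nat \<Rightarrow> (nat \<Rightarrow> real) \<Rightarrow> (nat \<Rightarrow> real) \<Rightarrow> real" where
  "inner_N N x y = (\<Sum>j<N. x j * y j)"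

definition has_frame :: "nat \<Rightarrow> (nat \<Rightarrow> real) set \<Rightarrow> real \<Rightarrow> bool" where
  "has_frame N L t = (\<exists>f :: nat \<Rightarrow> nat \<Rightarrow> real.
      (\<forall>i<N. f i \<in> L) \<and> (\<forall>i<N. \<forall>j<N. inner_N N (f i) (f j) = (if i = j then t else 0)))"

end

theory Submission
  imports Defs "HOL-Computational_Algebra.Primes"
begin

text \<open>
  Write \<open>W\<close> for \<open>W\<^sub>3\<^sub>2\<^sub>,\<^sub>2\<^sub>3\<close>, a skew matrix with \<open>W W\<^sup>T = 23 I\<close>. If \<open>Y\<close> is skew with
  \<open>Y Y\<^sup>T = s I\<close> and \<open>Y W\<^sup>T = W Y\<^sup>T\<close>, then the block matrix
  \<open>X = [[x I + 3 Y, y W + 3 a I], [y W - 3 a I, x I - 3 Y]]\<close>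
  satisfies \<open>X X\<^sup>T = (x\<^sup>2 + 23 y\<^sup>2 + 9 (a\<^sup>2 + s)) I\<close>. Such matrices \<open>Y = c G + d J + e K\<close>
  with \<open>s = c\<^sup>2 + d\<^sup>2 + e\<^sup>2\<close> come from three skew signed permutation matrices that
  anticommute pairwise and commute with \<open>W\<close>, like the quaternion units: reading each half of
  the coordinates as \<open>\<int>[x]/(x\<^sup>1\<^sup>6 + 1)\<close>, \<open>G = shift_mat\<close> multiplies both halves by \<open>x\<^sup>8\<close>,
  and \<open>J = swap_mat 16\<close>, \<open>K = swap_mat 8\<close> exchange the halves through \<open>x\<^sup>r \<mapsto> x\<^sup>1\<^sup>6\<^sup>-\<^sup>r\<close>
  and \<open>x\<^sup>r \<mapsto> x\<^sup>8\<^sup>-\<^sup>r\<close>.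

  If \<open>x \<equiv> y (mod 3)\<close>, the rows of \<open>X\<close> are congruent mod 3 to \<open>x\<close> times rows of \<open>(I | W)\<close> and
  of \<open>W (I | W) = (W | -23 I)\<close>, so the rows of \<open>X / \<surd>3\<close> form a \<open>k\<close>-frame of
  \<open>A\<^sub>3(C\<^sub>3(W))\<close> whenever \<open>3 k = x\<^sup>2 + 23 y\<^sup>2 + 9 (a\<^sup>2 + c\<^sup>2 + d\<^sup>2 + e\<^sup>2)\<close>. For \<open>k \<ge> 3\<close> outside
  \<open>{4, 5, 7, 10}\<close> take \<open>(x, y) = (0, 0), (4, 1)\<close> or \<open>(1, 1)\<close> according to \<open>k mod 3\<close>; the rest
  \<open>(3 k - x\<^sup>2 - 23 y\<^sup>2) / 9\<close> is a sum of four squares by Lagrange's theorem, proved below by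
  Euler's descent.
\<close>

section \<open>Lagrange's four-square theorem\<close>

definition four_squares :: "int \<Rightarrow> bool" where
  "four_squares n \<longleftrightarrow> (\<exists>a b c d. n = a\<^sup>2 + b\<^sup>2 + c\<^sup>2 + d\<^sup>2)"

lemma euler_four_square_identity:
  fixes a b c d e f g h :: "'a :: comm_ring_1"
  shows "(a\<^sup>2 + b\<^sup>2 + c\<^sup>2 + d\<^sup>2) * (e\<^sup>2 + f\<^sup>2 + g\<^sup>2 + h\<^sup>2) =
    (a*e + b*f + c*g + d*h)\<^sup>2 + (a*f - b*e + c*h - d*g)\<^sup>2 +
    (a*g - b*h - c*e + d*f)\<^sup>2 + (a*h + b*g - c*f - d*e)\<^sup>2"
  by (simp add: power2_eq_square algebra_simps)

lemma four_squares_mult: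
  assumes "four_squares m" "four_squares n"
  shows "four_squares (m * n)"
proof -
  obtain a b c d e f g h where
    "m = a\<^sup>2 + b\<^sup>2 + c\<^sup>2 + d\<^sup>2" "n = e\<^sup>2 + f\<^sup>2 + g\<^sup>2 + h\<^sup>2"
    using assms unfolding four_squares_def by blast
  then show ?thesis
    unfolding four_squares_def by (simp only: euler_four_square_identity) blast
qed

lemma four_squares_cancel_square:
  fixes M n u1 u2 u3 u4 :: int
  assumes "M \<noteq> 0" and "M dvd u1" "M dvd u2" "M dvd u3" "M dvd u4"
    and "M\<^sup>2 * n = u1\<^sup>2 + u2\<^sup>2 + u3\<^sup>2 + u4\<^sup>2"
  shows "four_squares n"
proof -
  obtain v1 v2 v3 v4 where "u1 = M * v1" "u2 = M * v2" "u3 = M * v3" "u4 = M * v4"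
    using assms(2-5) by (metis dvdE)
  with assms(6) have "M\<^sup>2 * n = M\<^sup>2 * (v1\<^sup>2 + v2\<^sup>2 + v3\<^sup>2 + v4\<^sup>2)"
    by (simp add: power_mult_distrib algebra_simps)
  with \<open>M \<noteq> 0\<close> show ?thesis
    unfolding four_squares_def by auto
qed

lemma centered_remainder:
  fixes M x :: int
  assumes "0 < M"
  shows "\<exists>t. \<bar>2 * (x - M * t)\<bar> \<le> M"
proof -
  define h where "h = M div 2"
  have "M * ((x + h) div M) + (x + h) mod M = x + h"
    by (rule mult_div_mod_eq)
  then have "x - M * ((x + h) div M) = (x + h) mod M - h"
    by linarith
  moreover have "0 \<le> (x + h) mod M" "(x + h) mod M < M" "2 * h \<le> M" "M \<le> 2 * h + 1"
    using assms unfolding h_def by auto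
  ultimately show ?thesis by (intro exI[of _ "(x + h) div M"]) simp
qed

lemma dvd_of_degenerate_reduction:
  fixes M p y1 y2 y3 y4 t1 t2 t3 t4 :: int
  assumes "M \<noteq> 0"
    and "M * p = (y1 + M*t1)\<^sup>2 + (y2 + M*t2)\<^sup>2 + (y3 + M*t3)\<^sup>2 + (y4 + M*t4)\<^sup>2"
    and "M dvd 2*y1" "M dvd 2*y2" "M dvd 2*y3" "M dvd 2*y4"
    and "M\<^sup>2 dvd y1\<^sup>2 + y2\<^sup>2 + y3\<^sup>2 + y4\<^sup>2"
  shows "M dvd p"
proof -
  have "M * p = (y1\<^sup>2 + y2\<^sup>2 + y3\<^sup>2 + y4\<^sup>2)
      + M * (2*y1*t1 + 2*y2*t2 + 2*y3*t3 + 2*y4*t4) + M\<^sup>2 * (t1\<^sup>2 + t2\<^sup>2 + t3\<^sup>2 + t4\<^sup>2)"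
    unfolding assms(2) by (simp add: power2_eq_square algebra_simps)
  moreover have "M dvd 2*y1*t1 + 2*y2*t2 + 2*y3*t3 + 2*y4*t4"
    using assms(3-6) by (intro dvd_add) (simp_all add: dvd_mult2)
  then have "M\<^sup>2 dvd M * (2*y1*t1 + 2*y2*t2 + 2*y3*t3 + 2*y4*t4)"
    by (simp add: power2_eq_square)
  ultimately have "M * M dvd M * p"
    using assms(7) by (simp add: power2_eq_square)
  with \<open>M \<noteq> 0\<close> show ?thesis by simp
qed

lemma four_squares_of_reduced_representation:
  fixes M p r x1 x2 x3 x4 t1 t2 t3 t4 :: int
  assumes "M \<noteq> 0" and Mp: "M * p = x1\<^sup>2 + x2\<^sup>2 + x3\<^sup>2 + x4\<^sup>2"
    and Mr: "M * r = (x1 - M*t1)\<^sup>2 + (x2 - M*t2)\<^sup>2 + (x3 - M*t3)\<^sup>2 + (x4 - M*t4)\<^sup>2"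
  shows "four_squares (r * p)"
proof -
  define y1 y2 y3 y4 where "y1 = x1 - M*t1" "y2 = x2 - M*t2" "y3 = x3 - M*t3" "y4 = x4 - M*t4"
  show ?thesis
  proof (rule four_squares_cancel_square)
    show "M \<noteq> 0" by fact
    show "M dvd x1*y1 + x2*y2 + x3*y3 + x4*y4"
    proof
      show "x1*y1 + x2*y2 + x3*y3 + x4*y4 = M * (p - (x1*t1 + x2*t2 + x3*t3 + x4*t4))"
        using Mp unfolding y1_y2_y3_y4_def by (simp add: power2_eq_square algebra_simps)
    qed
    show "M dvd x1*y2 - x2*y1 + x3*y4 - x4*y3"
      by (rule dvdI[of _ _ "x2*t1 - x1*t2 + x4*t3 - x3*t4"]) (simp add: y1_y2_y3_y4_def algebra_simps)
    show "M dvd x1*y3 - x2*y4 - x3*y1 + x4*y2"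
      by (rule dvdI[of _ _ "x3*t1 - x1*t3 + x2*t4 - x4*t2"]) (simp add: y1_y2_y3_y4_def algebra_simps)
    show "M dvd x1*y4 + x2*y3 - x3*y2 - x4*y1"
      by (rule dvdI[of _ _ "x4*t1 - x1*t4 + x3*t2 - x2*t3"]) (simp add: y1_y2_y3_y4_def algebra_simps)
    have "M\<^sup>2 * (r * p) = (M * p) * (M * r)"
      by (simp add: power2_eq_square)
    then show "M\<^sup>2 * (r * p) = (x1*y1 + x2*y2 + x3*y3 + x4*y4)\<^sup>2 + (x1*y2 - x2*y1 + x3*y4 - x4*y3)\<^sup>2
        + (x1*y3 - x2*y4 - x3*y1 + x4*y2)\<^sup>2 + (x1*y4 + x2*y3 - x3*y2 - x4*y1)\<^sup>2"
      unfolding Mp Mr y1_y2_y3_y4_def[symmetric] euler_four_square_identity .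
  qed
qed

lemma reduced_multiplier_bounds:
  fixes M p r y1 y2 y3 y4 t1 t2 t3 t4 :: int
  assumes M: "2 \<le> M" and not_dvd: "\<not> M dvd p"
    and Mp: "M * p = (y1 + M*t1)\<^sup>2 + (y2 + M*t2)\<^sup>2 + (y3 + M*t3)\<^sup>2 + (y4 + M*t4)\<^sup>2"
    and Mr: "M * r = y1\<^sup>2 + y2\<^sup>2 + y3\<^sup>2 + y4\<^sup>2"
    and bounds: "\<bar>2*y1\<bar> \<le> M" "\<bar>2*y2\<bar> \<le> M" "\<bar>2*y3\<bar> \<le> M" "\<bar>2*y4\<bar> \<le> M"
  shows "0 < r \<and> r < M"
proof -
  have sq_bounds: "(2*y1)\<^sup>2 \<le> M\<^sup>2" "(2*y2)\<^sup>2 \<le> M\<^sup>2" "(2*y3)\<^sup>2 \<le> M\<^sup>2" "(2*y4)\<^sup>2 \<le> M\<^sup>2"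
    using bounds M unfolding abs_le_square_iff[symmetric] by simp_all
  have "0 \<le> M * r" unfolding Mr by simp
  then have "0 \<le> r" using M by (simp add: zero_le_mult_iff)
  have four_Mr: "4 * (M * r) = (2*y1)\<^sup>2 + (2*y2)\<^sup>2 + (2*y3)\<^sup>2 + (2*y4)\<^sup>2"
    unfolding Mr by (simp add: power_mult_distrib)
  then have "M * r \<le> M * M" using sq_bounds by (simp add: power2_eq_square)
  then have "r \<le> M" using M by simp
  \<comment> \<open>At both extremes every \<open>2 y\<^sub>i\<close> is a multiple of \<open>M\<close>, which would force \<open>M\<close> to divide \<open>p\<close>.\<close>
  have "r \<noteq> 0 \<and> r \<noteq> M"
  proof (rule ccontr)
    assume "\<not> (r \<noteq> 0 \<and> r \<noteq> M)"
    then consider "r = 0" | "r = M" by blast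
    then have "M dvd 2*y1 \<and> M dvd 2*y2 \<and> M dvd 2*y3 \<and> M dvd 2*y4 \<and> M\<^sup>2 dvd M * r"
    proof cases
      case 1
      then have "y1\<^sup>2 + y2\<^sup>2 + y3\<^sup>2 + y4\<^sup>2 = 0" using Mr by simp
      then have "y1 = 0 \<and> y2 = 0 \<and> y3 = 0 \<and> y4 = 0"
        by (simp add: add_nonneg_eq_0_iff)
      with 1 show ?thesis by simp
    next
      case 2
      then have "(2*y1)\<^sup>2 = M\<^sup>2 \<and> (2*y2)\<^sup>2 = M\<^sup>2 \<and> (2*y3)\<^sup>2 = M\<^sup>2 \<and> (2*y4)\<^sup>2 = M\<^sup>2"
        using four_Mr sq_bounds by (simp add: power2_eq_square)
      moreover have "M dvd z" if "z\<^sup>2 = M\<^sup>2" for z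
        using that by (auto simp: power2_eq_iff)
      ultimately show ?thesis
        using 2 by (simp add: power2_eq_square)
    qed
    with M Mp have "M dvd p"
      unfolding Mr by (intro dvd_of_degenerate_reduction[of M p y1 t1 y2 t2 y3 t3 y4 t4]) simp_all
    with not_dvd show False ..
  qed
  with \<open>0 \<le> r\<close> \<open>r \<le> M\<close> show ?thesis by auto
qed

lemma four_squares_descent_step:
  fixes M p x1 x2 x3 x4 :: int
  assumes M: "2 \<le> M" and not_dvd: "\<not> M dvd p"
    and Mp: "M * p = x1\<^sup>2 + x2\<^sup>2 + x3\<^sup>2 + x4\<^sup>2"
  shows "\<exists>r. 0 < r \<and> r < M \<and> four_squares (r * p)"
proof -
  have "\<exists>t. \<bar>2 * (x - M * t)\<bar> \<le> M" for x
    using centered_remainder M by simp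
  then obtain t1 t2 t3 t4 where bounds:
    "\<bar>2 * (x1 - M*t1)\<bar> \<le> M" "\<bar>2 * (x2 - M*t2)\<bar> \<le> M"
    "\<bar>2 * (x3 - M*t3)\<bar> \<le> M" "\<bar>2 * (x4 - M*t4)\<bar> \<le> M"
    by meson
  define r where "r = p - (2*x1*t1 - M*t1\<^sup>2) - (2*x2*t2 - M*t2\<^sup>2)
     - (2*x3*t3 - M*t3\<^sup>2) - (2*x4*t4 - M*t4\<^sup>2)"
  have Mr: "M * r = (x1 - M*t1)\<^sup>2 + (x2 - M*t2)\<^sup>2 + (x3 - M*t3)\<^sup>2 + (x4 - M*t4)\<^sup>2"
    unfolding r_def using Mp by (simp add: power2_eq_square algebra_simps)
  have "0 < r \<and> r < M"
    by (rule reduced_multiplier_bounds[of M p "x1 - M*t1" t1 "x2 - M*t2" t2 "x3 - M*t3" t3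
          "x4 - M*t4" t4 r])
      (use M not_dvd Mp Mr bounds in simp_all)
  moreover have "four_squares (r * p)"
    using M Mp Mr by (intro four_squares_of_reduced_representation) simp_all
  ultimately show ?thesis by blast
qed

lemma four_squares_prime_descent:
  fixes p m :: nat
  assumes p: "prime p"
  shows "0 < m \<Longrightarrow> m < p \<Longrightarrow> four_squares (int m * int p) \<Longrightarrow> four_squares (int p)"
proof (induction m rule: less_induct)
  case (less m)
  show ?case
  proof (cases "m = 1")
    case True
    with less.prems show ?thesis by simp
  next
    case False
    have "\<not> m dvd p"
    proof
      assume "m dvd p"
      with p have "m = 1 \<or> m = p" by (simp add: prime_nat_iff)
      with False less.prems(2) show False by simp
    qed
    then have "\<not> int m dvd int p" by simp
    moreover have "2 \<le> int m" using False less.prems(1) by linarith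
    moreover obtain x1 x2 x3 x4 where "int m * int p = x1\<^sup>2 + x2\<^sup>2 + x3\<^sup>2 + x4\<^sup>2"
      using less.prems(3) unfolding four_squares_def by blast
    ultimately obtain r where "0 < r" "r < int m" "four_squares (r * int p)"
      using four_squares_descent_step by blast
    then show ?thesis
      using less.IH[of "nat r"] less.prems(2) by simp
  qed
qed

lemma eq_of_prime_dvd_squares_diff:
  fixes p x y :: int
  assumes "prime p" "0 \<le> x" "0 \<le> y" "2 * x < p" "2 * y < p" "p dvd x\<^sup>2 - y\<^sup>2"
  shows "x = y"
proof -
  have "x\<^sup>2 - y\<^sup>2 = (x - y) * (x + y)"
    by (simp add: power2_eq_square algebra_simps)
  with assms have "p dvd x - y \<or> p dvd x + y"
    by (simp add: prime_dvd_mult_iff)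
  moreover have "\<bar>x - y\<bar> < p" "x + y < p"
    using assms by linarith+
  ultimately show ?thesis
  proof (elim disjE)
    assume "p dvd x - y"
    with \<open>\<bar>x - y\<bar> < p\<close> have "x - y = 0"
      using dvd_imp_le_int[of "x - y" p] by linarith
    then show ?thesis by simp
  next
    assume "p dvd x + y"
    with \<open>x + y < p\<close> assms(2,3) have "x + y = 0"
      using dvd_imp_le_int[of "x + y" p] by linarith
    then show ?thesis using assms(2,3) by simp
  qed
qed

text \<open>Pigeonhole: the sets of residues of \<open>x\<^sup>2\<close> and of \<open>-1 - y\<^sup>2\<close> for
  \<open>0 \<le> x, y \<le> (p - 1) / 2\<close> both have \<open>(p + 1) / 2\<close> elements, so they meet.\<close>
lemma odd_prime_dvd_sum_two_squares_plus_one: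
  fixes p :: nat
  assumes p: "prime p" "odd p"
  shows "\<exists>(x::int) (y::int). 0 \<le> x \<and> 0 \<le> y \<and> 2 * x < int p \<and> 2 * y < int p \<and> int p dvd x\<^sup>2 + y\<^sup>2 + 1"
proof -
  define h :: int where "h = (int p - 1) div 2"
  have p_eq: "int p = 2 * h + 1" "0 \<le> h"
    using p unfolding h_def by (auto elim!: oddE)
  define sq where "sq x = x\<^sup>2 mod int p" for x
  define neg_sq where "neg_sq y = (-1 - y\<^sup>2) mod int p" for y
  have prime_int: "prime (int p)" using p by simp
  have inj_sq: "inj_on sq {0..h}"
    by (rule inj_onI, rule eq_of_prime_dvd_squares_diff[OF prime_int])
      (auto simp: sq_def p_eq mod_eq_dvd_iff)
  have inj_neg_sq: "inj_on neg_sq {0..h}"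
    by (rule inj_onI, rule eq_of_prime_dvd_squares_diff[OF prime_int])
      (auto simp: neg_sq_def p_eq mod_eq_dvd_iff dvd_diff_commute)
  have "0 < int p" using p_eq by simp
  then have "card (sq ` {0..h} \<union> neg_sq ` {0..h}) \<le> card {0..<int p}"
    by (intro card_mono) (auto simp: sq_def neg_sq_def)
  then have "card (sq ` {0..h} \<union> neg_sq ` {0..h}) \<le> p"
    by simp
  moreover have "card (sq ` {0..h}) + card (neg_sq ` {0..h}) = 2 * nat (h + 1)"
    by (simp add: card_image inj_sq inj_neg_sq)
  ultimately have "sq ` {0..h} \<inter> neg_sq ` {0..h} \<noteq> {}"
    using card_Un_disjoint[of "sq ` {0..h}" "neg_sq ` {0..h}"] p_eq by fastforce
  then obtain x y where "x \<in> {0..h}" "y \<in> {0..h}" "sq x = neg_sq y"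
    by blast
  then have "int p dvd x\<^sup>2 - (-1 - y\<^sup>2)"
    by (simp add: sq_def neg_sq_def mod_eq_dvd_iff)
  then have "int p dvd x\<^sup>2 + y\<^sup>2 + 1"
    by (simp add: algebra_simps)
  moreover have "0 \<le> x" "0 \<le> y" "2 * x < int p" "2 * y < int p"
    using \<open>x \<in> {0..h}\<close> \<open>y \<in> {0..h}\<close> p_eq by auto
  ultimately show ?thesis by blast
qed

lemma sum_two_squares_plus_one_quotient_bounds:
  fixes p :: nat and x y t :: int
  assumes "2 \<le> p" "0 \<le> x" "0 \<le> y" "2 * x < int p" "2 * y < int p"
    and t: "x\<^sup>2 + y\<^sup>2 + 1 = int p * t"
  shows "0 < t \<and> t < int p"
proof -
  have "0 < x\<^sup>2 + y\<^sup>2 + 1"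
    using zero_le_power2[of x] zero_le_power2[of y] by linarith
  with t \<open>2 \<le> p\<close> have "0 < t"
    by (simp add: zero_less_mult_iff)
  have "(2 * x)\<^sup>2 < (int p)\<^sup>2" "(2 * y)\<^sup>2 < (int p)\<^sup>2"
    using assms power_strict_mono[of "2 * x" "int p" 2] power_strict_mono[of "2 * y" "int p" 2]
    by simp_all
  moreover have "(2 * x)\<^sup>2 = 4 * x\<^sup>2" "(2 * y)\<^sup>2 = 4 * y\<^sup>2"
    by (simp_all add: power_mult_distrib)
  moreover have "4 \<le> (int p)\<^sup>2"
    using power_mono[of 2 "int p" 2] \<open>2 \<le> p\<close> by simp
  ultimately have "int p * t < int p * int p"
    unfolding t[symmetric] power2_eq_square by linarith
  with \<open>2 \<le> p\<close> \<open>0 < t\<close> show ?thesis by simp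
qed

lemma four_squares_prime:
  fixes p :: nat
  assumes p: "prime p"
  shows "four_squares (int p)"
proof (cases "p = 2")
  case True
  then have "int p = 1\<^sup>2 + 1\<^sup>2 + 0\<^sup>2 + 0\<^sup>2" by simp
  then show ?thesis unfolding four_squares_def by blast
next
  case False
  with prime_ge_2_nat[OF p] have "2 < p" by linarith
  with p have "odd p" by (rule prime_odd_nat)
  then obtain x y :: int where xy: "0 \<le> x" "0 \<le> y" "2 * x < int p" "2 * y < int p"
    and "int p dvd x\<^sup>2 + y\<^sup>2 + 1"
    using odd_prime_dvd_sum_two_squares_plus_one p by blast
  then obtain t where t: "x\<^sup>2 + y\<^sup>2 + 1 = int p * t"
    by (elim dvdE)
  with xy \<open>2 < p\<close> have "0 < t" "t < int p"
    using sum_two_squares_plus_one_quotient_bounds[of p x y t] by simp_all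
  have "int (nat t) * int p = x\<^sup>2 + y\<^sup>2 + 1\<^sup>2 + 0\<^sup>2"
    using \<open>0 < t\<close> t by (simp add: mult.commute)
  then have "four_squares (int (nat t) * int p)"
    unfolding four_squares_def by blast
  moreover have "0 < nat t" "nat t < p"
    using \<open>0 < t\<close> \<open>t < int p\<close> by linarith+
  ultimately show ?thesis
    using four_squares_prime_descent[OF p] by blast
qed

theorem four_squares_nat: "four_squares (int n)"
proof (induction n rule: prime_divisors_induct)
  case zero
  have "int 0 = 0\<^sup>2 + 0\<^sup>2 + 0\<^sup>2 + 0\<^sup>2" by simp
  then show ?case unfolding four_squares_def by blast
next
  case (unit x)
  then have "int x = 1\<^sup>2 + 0\<^sup>2 + 0\<^sup>2 + 0\<^sup>2" by simp
  then show ?case unfolding four_squares_def by blast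
next
  case (factor p x)
  then show ?case
    using four_squares_mult[OF four_squares_prime] by (simp only: of_nat_mult)
qed

section \<open>Row Gram matrices of block matrices\<close>

definition delta :: "nat \<Rightarrow> nat \<Rightarrow> int" where
  "delta i j = (if i = j then 1 else 0)"

definition row_gram :: "nat \<Rightarrow> (nat \<Rightarrow> nat \<Rightarrow> int) \<Rightarrow> (nat \<Rightarrow> nat \<Rightarrow> int) \<Rightarrow> nat \<Rightarrow> nat \<Rightarrow> int" where
  "row_gram n U V i j = (\<Sum>l<n. U i l * V j l)"

definition skew :: "nat \<Rightarrow> (nat \<Rightarrow> nat \<Rightarrow> int) \<Rightarrow> bool" where
  "skew n U \<longleftrightarrow> (\<forall>i<n. \<forall>j<n. U j i = - U i j)"

lemma delta_sym: "delta j i = delta i j"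
  by (simp add: delta_def)

lemma row_gram_add_left:
  "row_gram n (\<lambda>i j. A i j + B i j) C i j = row_gram n A C i j + row_gram n B C i j"
  by (simp add: row_gram_def distrib_right sum.distrib)

lemma row_gram_add_right:
  "row_gram n C (\<lambda>i j. A i j + B i j) i j = row_gram n C A i j + row_gram n C B i j"
  by (simp add: row_gram_def distrib_left sum.distrib)

lemma row_gram_diff_left:
  "row_gram n (\<lambda>i j. A i j - B i j) C i j = row_gram n A C i j - row_gram n B C i j"
  by (simp add: row_gram_def left_diff_distrib sum_subtractf)

lemma row_gram_diff_right:
  "row_gram n C (\<lambda>i j. A i j - B i j) i j = row_gram n C A i j - row_gram n C B i j"
  by (simp add: row_gram_def right_diff_distrib sum_subtractf)

lemma row_gram_scale_left:
  "row_gram n (\<lambda>i j. c * A i j) B i j = c * row_gram n A B i j"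
  by (simp add: row_gram_def sum_distrib_left mult.assoc)

lemma row_gram_scale_right:
  "row_gram n B (\<lambda>i j. c * A i j) i j = c * row_gram n B A i j"
  by (simp add: row_gram_def sum_distrib_left algebra_simps)

lemmas row_gram_bilinear =
  row_gram_add_left row_gram_add_right row_gram_diff_left row_gram_diff_right
  row_gram_scale_left row_gram_scale_right

lemma row_gram_delta_left:
  assumes "i < n"
  shows "row_gram n delta U i j = U j i"
proof -
  have "row_gram n delta U i j = (\<Sum>l<n. if l = i then U j l else 0)"
    unfolding row_gram_def delta_def by (intro sum.cong) auto
  with assms show ?thesis by simp
qed

lemma row_gram_delta_right:
  assumes "j < n"
  shows "row_gram n U delta i j = U i j"
proof -
  have "row_gram n U delta i j = (\<Sum>l<n. if l = j then U i l else 0)"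
    unfolding row_gram_def delta_def by (intro sum.cong) auto
  with assms show ?thesis by simp
qed

definition block ::
  "nat \<Rightarrow> (nat \<Rightarrow> nat \<Rightarrow> int) \<Rightarrow> (nat \<Rightarrow> nat \<Rightarrow> int) \<Rightarrow> (nat \<Rightarrow> nat \<Rightarrow> int) \<Rightarrow> (nat \<Rightarrow> nat \<Rightarrow> int) \<Rightarrow> nat \<Rightarrow> nat \<Rightarrow> int"
where
  "block n A B C D i j =
     (if i < n then if j < n then A i j else B i (j - n)
      else if j < n then C (i - n) j else D (i - n) (j - n))"

lemma sum_lessThan_double:
  fixes f :: "nat \<Rightarrow> 'a :: comm_monoid_add"
  shows "(\<Sum>l<2 * n. f l) = (\<Sum>l<n. f l) + (\<Sum>l<n. f (l + n))"
proof -
  have "(\<Sum>l<2 * n. f l) = sum f {0..<n} + sum f {n..<2 * n}"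
    using sum.atLeastLessThan_concat[of 0 n "2 * n" f] by (simp add: atLeast0LessThan)
  also have "sum f {n..<2 * n} = (\<Sum>l<n. f (l + n))"
    using sum.shift_bounds_nat_ivl[of f 0 n n] by (simp add: atLeast0LessThan mult_2)
  finally show ?thesis by (simp add: atLeast0LessThan)
qed

lemma row_gram_block:
  "row_gram (2 * n) (block n A B C D) (block n A' B' C' D') =
     block n (\<lambda>i j. row_gram n A A' i j + row_gram n B B' i j)
             (\<lambda>i j. row_gram n A C' i j + row_gram n B D' i j)
             (\<lambda>i j. row_gram n C A' i j + row_gram n D B' i j)
             (\<lambda>i j. row_gram n C C' i j + row_gram n D D' i j)"
  by (intro ext) (simp add: row_gram_def sum_lessThan_double block_def)

definition frame_block ::
  "nat \<Rightarrow> int \<Rightarrow> (nat \<Rightarrow> nat \<Rightarrow> int) \<Rightarrow> (nat \<Rightarrow> nat \<Rightarrow> int) \<Rightarrow> int \<Rightarrow> int \<Rightarrow> int \<Rightarrow> nat \<Rightarrow> nat \<Rightarrow> int"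
where
  "frame_block n c W Y x y a = block n
     (\<lambda>i j. x * delta i j + c * Y i j) (\<lambda>i j. y * W i j + c * a * delta i j)
     (\<lambda>i j. y * W i j - c * a * delta i j) (\<lambda>i j. x * delta i j - c * Y i j)"

context
  fixes n :: nat and W Y :: "nat \<Rightarrow> nat \<Rightarrow> int" and w s :: int
  assumes W_skew: "skew n W" and Y_skew: "skew n Y"
    and W_gram: "\<forall>i<n. \<forall>j<n. row_gram n W W i j = w * delta i j"
    and Y_gram: "\<forall>i<n. \<forall>j<n. row_gram n Y Y i j = s * delta i j"
    and Y_W_comm: "\<forall>i<n. \<forall>j<n. row_gram n Y W i j = row_gram n W Y i j"
begin

lemma frame_block_blocks:
  fixes c x y a :: int
  assumes "i < n" "j < n"
  defines "A \<equiv> \<lambda>i j. x * delta i j + c * Y i j" and "B \<equiv> \<lambda>i j. y * W i j + c * a * delta i j"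
    and "C \<equiv> \<lambda>i j. y * W i j - c * a * delta i j" and "D \<equiv> \<lambda>i j. x * delta i j - c * Y i j"
  shows "row_gram n A A i j + row_gram n B B i j = (x\<^sup>2 + w * y\<^sup>2 + c\<^sup>2 * (a\<^sup>2 + s)) * delta i j"
    and "row_gram n A C i j + row_gram n B D i j = 0"
    and "row_gram n C A i j + row_gram n D B i j = 0"
    and "row_gram n C C i j + row_gram n D D i j = (x\<^sup>2 + w * y\<^sup>2 + c\<^sup>2 * (a\<^sup>2 + s)) * delta i j"
proof -
  note facts = row_gram_delta_left[OF \<open>i < n\<close>] row_gram_delta_right[OF \<open>j < n\<close>] delta_sym
    W_skew[unfolded skew_def, rule_format, OF assms(1,2)] Y_skew[unfolded skew_def, rule_format, OF assms(1,2)]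
    W_gram[rule_format, OF assms(1,2)] Y_gram[rule_format, OF assms(1,2)]
    Y_W_comm[rule_format, OF assms(1,2)]
  show "row_gram n A A i j + row_gram n B B i j = (x\<^sup>2 + w * y\<^sup>2 + c\<^sup>2 * (a\<^sup>2 + s)) * delta i j"
    "row_gram n C C i j + row_gram n D D i j = (x\<^sup>2 + w * y\<^sup>2 + c\<^sup>2 * (a\<^sup>2 + s)) * delta i j"
    unfolding A_def B_def C_def D_def
    by (simp_all only: row_gram_bilinear facts) (simp_all add: algebra_simps power2_eq_square)
  show "row_gram n A C i j + row_gram n B D i j = 0" "row_gram n C A i j + row_gram n D B i j = 0"
    unfolding A_def B_def C_def D_def
    by (simp_all only: row_gram_bilinear facts) (simp_all add: algebra_simps)
qed

lemma row_gram_frame_block: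
  assumes "i < 2 * n" "j < 2 * n"
  shows "row_gram (2 * n) (frame_block n c W Y x y a) (frame_block n c W Y x y a) i j =
    (x\<^sup>2 + w * y\<^sup>2 + c\<^sup>2 * (a\<^sup>2 + s)) * delta i j"
  using assms frame_block_blocks[of i j] frame_block_blocks[of "i - n" j]
    frame_block_blocks[of i "j - n"] frame_block_blocks[of "i - n" "j - n"]
  unfolding frame_block_def row_gram_block
  by (auto simp: block_def delta_def)

end

section \<open>Signed permutation matrices\<close>

definition signed_perm :: "(nat \<Rightarrow> nat) \<Rightarrow> (nat \<Rightarrow> int) \<Rightarrow> nat \<Rightarrow> nat \<Rightarrow> int" where
  "signed_perm P S i j = (if j = P i then S i else 0)"

lemma row_gram_signed_perm_left:
  "row_gram n (signed_perm P S) U i j = (if P i < n then S i * U j (P i) else 0)"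
proof -
  have "row_gram n (signed_perm P S) U i j = (\<Sum>l<n. if l = P i then S i * U j l else 0)"
    unfolding row_gram_def signed_perm_def by (intro sum.cong) auto
  then show ?thesis by simp
qed

lemma row_gram_signed_perm_right:
  "row_gram n U (signed_perm P S) i j = (if P j < n then U i (P j) * S j else 0)"
proof -
  have "row_gram n U (signed_perm P S) i j = (\<Sum>l<n. if l = P j then U i l * S j else 0)"
    unfolding row_gram_def signed_perm_def by (intro sum.cong) auto
  then show ?thesis by simp
qed

definition skew_signed_involution :: "nat \<Rightarrow> (nat \<Rightarrow> nat) \<Rightarrow> (nat \<Rightarrow> int) \<Rightarrow> bool" where
  "skew_signed_involution n P S \<longleftrightarrow>
     (\<forall>i<n. P i < n \<and> P (P i) = i \<and> S (P i) = - S i \<and> \<bar>S i\<bar> = 1)"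

lemma skew_signed_involutionD:
  assumes "skew_signed_involution n P S" "i < n"
  shows "P i < n" "P (P i) = i" "S (P i) = - S i" "\<bar>S i\<bar> = 1"
  using assms unfolding skew_signed_involution_def by auto

lemma skew_signed_involution_skew:
  assumes "skew_signed_involution n P S"
  shows "skew n (signed_perm P S)"
  unfolding skew_def
proof (intro allI impI)
  fix i j assume "i < n" "j < n"
  then have "i = P j \<longleftrightarrow> j = P i"
    using skew_signed_involutionD(2)[OF assms] by metis
  then show "signed_perm P S j i = - signed_perm P S i j"
    using skew_signed_involutionD(3)[OF assms \<open>i < n\<close>] by (auto simp: signed_perm_def)
qed

lemma skew_signed_involution_orthonormal:
  assumes "skew_signed_involution n P S" "i < n" "j < n"
  shows "row_gram n (signed_perm P S) (signed_perm P S) i j = delta i j"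
proof -
  have "P i = P j \<longleftrightarrow> i = j"
    using skew_signed_involutionD(2)[OF assms(1)] assms(2,3) by metis
  moreover have "S i * S i = 1"
    using skew_signed_involutionD(4)[OF assms(1,2)] abs_mult_self_eq[of "S i"] by simp
  ultimately show ?thesis
    using skew_signed_involutionD(1)[OF assms(1,2)]
    by (auto simp: row_gram_signed_perm_left signed_perm_def delta_def)
qed

definition anticommuting_involutions ::
  "nat \<Rightarrow> (nat \<Rightarrow> nat) \<Rightarrow> (nat \<Rightarrow> int) \<Rightarrow> (nat \<Rightarrow> nat) \<Rightarrow> (nat \<Rightarrow> int) \<Rightarrow> bool"
where
  "anticommuting_involutions n P S P' S' \<longleftrightarrow>
     (\<forall>i<n. P (P' i) = P' (P i) \<and> S i * S' (P' (P i)) = - (S' i * S (P' (P i))))"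

lemma anticommuting_involutions_anticommute:
  assumes inv: "skew_signed_involution n P S" and inv': "skew_signed_involution n P' S'"
    and anti: "anticommuting_involutions n P S P' S'"
    and "i < n" "j < n"
  shows "row_gram n (signed_perm P' S') (signed_perm P S) i j =
    - row_gram n (signed_perm P S) (signed_perm P' S') i j"
proof -
  note D = skew_signed_involutionD[OF inv] and D' = skew_signed_involutionD[OF inv']
  have comm: "P (P' i) = P' (P i)" "S i * S' (P' (P i)) = - (S' i * S (P' (P i)))"
    using anti \<open>i < n\<close> unfolding anticommuting_involutions_def by auto
  have "P i = P' j \<longleftrightarrow> j = P' (P i)"
    using D'(2)[OF \<open>j < n\<close>] D'(2)[OF D(1)[OF \<open>i < n\<close>]] by metis
  moreover have "P' i = P j \<longleftrightarrow> j = P' (P i)"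
    using D(2)[OF \<open>j < n\<close>] D(2)[OF D'(1)[OF \<open>i < n\<close>]] comm(1) by metis
  ultimately show ?thesis
    using D(1)[OF \<open>i < n\<close>] D'(1)[OF \<open>i < n\<close>] comm(2)
    by (auto simp: row_gram_signed_perm_left signed_perm_def)
qed

section \<open>Three quaternion units commuting with \<open>W\<^sub>3\<^sub>2\<^sub>,\<^sub>2\<^sub>3\<close>\<close>

text \<open>\<open>x\<^sup>e = negacyclic_sign e * x\<^bsup>negacyclic_index e\<^esup>\<close> in \<open>\<int>[x]/(x\<^sup>1\<^sup>6 + 1)\<close>.\<close>

definition negacyclic_index :: "nat \<Rightarrow> nat" where
  "negacyclic_index e = e mod 16"

definition negacyclic_sign :: "nat \<Rightarrow> int" where
  "negacyclic_sign e = (if even (e div 16) then 1 else -1)"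

definition shift_perm :: "nat \<Rightarrow> nat" where
  "shift_perm i = 16 * (i div 16) + negacyclic_index (i mod 16 + 8)"

definition shift_sign :: "nat \<Rightarrow> int" where
  "shift_sign i = negacyclic_sign (i mod 16 + 8)"

text \<open>\<open>swap_mat k = [[0, R], [-R, 0]]\<close> with \<open>R\<close> mapping \<open>x\<^sup>r\<close> to \<open>x\<^bsup>k - r\<^esup>\<close>. The exponent is
  written as \<open>k + 16 - r\<close> to stay in \<open>nat\<close>; this negates every entry, which the leading factor
  of \<open>swap_sign\<close> undoes on the top half and turns into the \<open>-R\<close> on the bottom half.\<close>

definition swap_perm :: "nat \<Rightarrow> nat \<Rightarrow> nat" where
  "swap_perm k i = 16 * (1 - i div 16) + negacyclic_index (k + 16 - i mod 16)"

definition swap_sign :: "nat \<Rightarrow> nat \<Rightarrow> int" where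
  "swap_sign k i = (if i < 16 then -1 else 1) * negacyclic_sign (k + 16 - i mod 16)"

abbreviation "shift_mat \<equiv> signed_perm shift_perm shift_sign"
abbreviation "swap_mat k \<equiv> signed_perm (swap_perm k) (swap_sign k)"

lemma all_less_iff_all_upt: "(\<forall>i<n. P i) \<longleftrightarrow> (\<forall>i\<in>set [0..<n]. P i)"
  by auto

definition rows :: "nat \<Rightarrow> (nat \<Rightarrow> nat \<Rightarrow> int) \<Rightarrow> int list list" where
  "rows n U = map (\<lambda>i. map (U i) [0..<n]) [0..<n]"

definition gram_list :: "int list list \<Rightarrow> int list list" where
  "gram_list R = map (\<lambda>r. map (\<lambda>r'. sum_list (map2 (*) r r')) R) R"

lemma row_gram_eq_gram_list:
  assumes "i < n" "j < n"
  shows "row_gram n U U i j = gram_list (rows n U) ! i ! j"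
  using assms
  by (simp add: gram_list_def rows_def row_gram_def zip_map_map zip_same_conv_map comp_def
      atLeast0LessThan flip: sum_set_upt_conv_sum_list_nat)

lemma W32_23_skew: "skew 32 W32_23"
  unfolding skew_def all_less_iff_all_upt by code_simp

lemma W32_23_gram: "\<forall>i<32. \<forall>j<32. row_gram 32 W32_23 W32_23 i j = 23 * delta i j"
proof -
  have "gram_list (rows 32 W32_23) = map (\<lambda>i. map (\<lambda>j. 23 * delta i j) [0..<32]) [0..<32]"
    unfolding delta_def by code_simp
  then show ?thesis
    by (simp add: row_gram_eq_gram_list)
qed

lemmas perm_defs = shift_perm_def shift_sign_def swap_perm_def swap_sign_def
  negacyclic_index_def negacyclic_sign_def

text \<open>The finite checks below first expand the quantifier into 32 closed instances: the
  simplifier is much slower when it unfolds these definitions under the binder.\<close>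

lemma upt_0_32:
  "[0..<32] = [0,1,2,3,4,5,6,7,8,9,10,11,12,13,14,15,16,17,18,19,20,21,22,23,24,25,26,27,28,29,30,31]"
  by (simp add: upt_rec)

lemma quaternion_units_involutions:
  "skew_signed_involution 32 shift_perm shift_sign"
  "skew_signed_involution 32 (swap_perm 16) (swap_sign 16)"
  "skew_signed_involution 32 (swap_perm 8) (swap_sign 8)"
  unfolding skew_signed_involution_def all_less_iff_all_upt upt_0_32
  by (simp_all only: list.set ball_simps) (simp_all add: perm_defs)

lemma quaternion_units_anticommuting:
  "anticommuting_involutions 32 shift_perm shift_sign (swap_perm 16) (swap_sign 16)"
  "anticommuting_involutions 32 shift_perm shift_sign (swap_perm 8) (swap_sign 8)"
  "anticommuting_involutions 32 (swap_perm 16) (swap_sign 16) (swap_perm 8) (swap_sign 8)"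
  unfolding anticommuting_involutions_def all_less_iff_all_upt upt_0_32
  by (simp_all only: list.set ball_simps) (simp_all add: perm_defs)

lemma quaternion_units_commute_W32_23:
  "\<forall>i<32. \<forall>j<32. row_gram 32 shift_mat W32_23 i j = row_gram 32 W32_23 shift_mat i j"
  "\<forall>i<32. \<forall>j<32. row_gram 32 (swap_mat 16) W32_23 i j = row_gram 32 W32_23 (swap_mat 16) i j"
  "\<forall>i<32. \<forall>j<32. row_gram 32 (swap_mat 8) W32_23 i j = row_gram 32 W32_23 (swap_mat 8) i j"
  unfolding all_less_iff_all_upt row_gram_signed_perm_left row_gram_signed_perm_right perm_defs
  by code_simp+

lemma row_gram_anticommuting_triple:
  assumes "row_gram n G G i j = delta i j" "row_gram n J J i j = delta i j"
    "row_gram n K K i j = delta i j"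
    and "row_gram n J G i j = - row_gram n G J i j" "row_gram n K G i j = - row_gram n G K i j"
    "row_gram n K J i j = - row_gram n J K i j"
  shows "row_gram n (\<lambda>i j. c * G i j + d * J i j + e * K i j) (\<lambda>i j. c * G i j + d * J i j + e * K i j) i j
    = (c\<^sup>2 + d\<^sup>2 + e\<^sup>2) * delta i j"
  by (simp only: row_gram_bilinear assms) (simp add: algebra_simps power2_eq_square)

definition pure_quaternion :: "int \<Rightarrow> int \<Rightarrow> int \<Rightarrow> nat \<Rightarrow> nat \<Rightarrow> int" where
  "pure_quaternion c d e = (\<lambda>i j. c * shift_mat i j + d * swap_mat 16 i j + e * swap_mat 8 i j)"

lemma pure_quaternion_skew: "skew 32 (pure_quaternion c d e)"
  unfolding skew_def
proof (intro allI impI)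
  fix i j :: nat assume "i < 32" "j < 32"
  with quaternion_units_involutions[THEN skew_signed_involution_skew]
  have "shift_mat j i = - shift_mat i j" "swap_mat 16 j i = - swap_mat 16 i j"
    "swap_mat 8 j i = - swap_mat 8 i j"
    unfolding skew_def by blast+
  then show "pure_quaternion c d e j i = - pure_quaternion c d e i j"
    unfolding pure_quaternion_def by simp
qed

lemma pure_quaternion_gram:
  "\<forall>i<32. \<forall>j<32. row_gram 32 (pure_quaternion c d e) (pure_quaternion c d e) i j = (c\<^sup>2 + d\<^sup>2 + e\<^sup>2) * delta i j"
  unfolding pure_quaternion_def
  by (intro allI impI row_gram_anticommuting_triple
      skew_signed_involution_orthonormal[OF quaternion_units_involutions(1)]
      skew_signed_involution_orthonormal[OF quaternion_units_involutions(2)]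
      skew_signed_involution_orthonormal[OF quaternion_units_involutions(3)]
      anticommuting_involutions_anticommute[OF quaternion_units_involutions(1,2) quaternion_units_anticommuting(1)]
      anticommuting_involutions_anticommute[OF quaternion_units_involutions(1,3) quaternion_units_anticommuting(2)]
      anticommuting_involutions_anticommute[OF quaternion_units_involutions(2,3) quaternion_units_anticommuting(3)])

lemma pure_quaternion_commute_W32_23:
  "\<forall>i<32. \<forall>j<32. row_gram 32 (pure_quaternion c d e) W32_23 i j = row_gram 32 W32_23 (pure_quaternion c d e) i j"
  using quaternion_units_commute_W32_23 unfolding pure_quaternion_def
  by (simp add: row_gram_bilinear)

lemma row_gram_frame_W32_23:
  assumes "i < 64" "j < 64"
  shows "row_gram 64 (frame_block 32 3 W32_23 (pure_quaternion c d e) x y a)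
      (frame_block 32 3 W32_23 (pure_quaternion c d e) x y a) i j
    = (x\<^sup>2 + 23 * y\<^sup>2 + 9 * (a\<^sup>2 + c\<^sup>2 + d\<^sup>2 + e\<^sup>2)) * delta i j"
  using row_gram_frame_block[OF W32_23_skew pure_quaternion_skew[of c d e] W32_23_gram
      pure_quaternion_gram[of c d e] pure_quaternion_commute_W32_23[of c d e], of i j 3 x y a] assms
  by (simp add: add.assoc)

section \<open>Frames in Construction A\<close>

lemma code_genI:
  assumes "\<forall>j<N. v j mod k = (\<Sum>i<n. u i * G i j) mod k"
  shows "(\<lambda>j. if j < N then v j mod k else 0) \<in> code_gen k n N G"
  using assms unfolding code_gen_def by auto

lemma sum_genIW:
  shows "j < 32 \<Longrightarrow> (\<Sum>l<32. u l * genIW l j) = u j"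
    and "32 \<le> j \<Longrightarrow> (\<Sum>l<32. u l * genIW l j) = (\<Sum>l<32. u l * W32_23 l (j - 32))"
proof -
  assume "j < 32"
  then have "(\<Sum>l<32. u l * genIW l j) = (\<Sum>l<32. if l = j then u l else 0)"
    unfolding genIW_def by (intro sum.cong) auto
  with \<open>j < 32\<close> show "(\<Sum>l<32. u l * genIW l j) = u j" by simp
qed (simp add: genIW_def)

lemma frame_block_top_row_mod3:
  assumes "i < 32" "y = x + 3 * q"
  shows "frame_block 32 3 W32_23 Y x y a i j mod 3 = (\<Sum>l<32. x * delta i l * genIW l j) mod 3"
proof (cases "j < 32")
  case True
  with assms(1) have "frame_block 32 3 W32_23 Y x y a i j = x * delta i j + 3 * Y i j"
    by (simp add: frame_block_def block_def)
  moreover from True have "(\<Sum>l<32. x * delta i l * genIW l j) = x * delta i j"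
    by (rule sum_genIW(1))
  ultimately show ?thesis by simp
next
  case False
  with assms have "frame_block 32 3 W32_23 Y x y a i j =
      x * W32_23 i (j - 32) + 3 * (q * W32_23 i (j - 32) + a * delta i (j - 32))"
    by (simp add: frame_block_def block_def algebra_simps)
  moreover have "(\<Sum>l<32. x * delta i l * W32_23 l (j - 32)) =
      (\<Sum>l<32. if l = i then x * W32_23 i (j - 32) else 0)"
    unfolding delta_def by (intro sum.cong) auto
  with False assms(1) have "(\<Sum>l<32. x * delta i l * genIW l j) = x * W32_23 i (j - 32)"
    using sum_genIW(2)[of j "\<lambda>l. x * delta i l"] by simp
  ultimately show ?thesis by (simp only: mod_mult_self2)
qed

lemma frame_block_bottom_row_mod3:
  assumes "32 \<le> i" "i < 64" "j < 64" "y = x + 3 * q"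
  shows "frame_block 32 3 W32_23 Y x y a i j mod 3 =
    (\<Sum>l<32. x * W32_23 (i - 32) l * genIW l j) mod 3"
proof -
  define i' where "i' = i - 32"
  have "i' < 32" using assms unfolding i'_def by simp
  show ?thesis
  proof (cases "j < 32")
    case True
    with assms have "frame_block 32 3 W32_23 Y x y a i j =
        x * W32_23 i' j + 3 * (q * W32_23 i' j - a * delta i' j)"
      unfolding i'_def by (simp add: frame_block_def block_def algebra_simps)
    moreover from True have "(\<Sum>l<32. x * W32_23 i' l * genIW l j) = x * W32_23 i' j"
      by (rule sum_genIW(1))
    ultimately show ?thesis
      unfolding i'_def by (simp only: mod_mult_self2)
  next
    case False
    define j' where "j' = j - 32"
    have "j' < 32" using assms False unfolding j'_def by simp
    have "W32_23 l j' = - W32_23 j' l" if "l < 32" for l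
      using W32_23_skew \<open>j' < 32\<close> that unfolding skew_def by blast
    then have "(\<Sum>l<32. x * W32_23 i' l * W32_23 l j') = - x * row_gram 32 W32_23 W32_23 i' j'"
      by (auto simp: row_gram_def sum_distrib_left intro!: sum.cong)
    also have "\<dots> = x * delta i' j' + 3 * (- 8 * x * delta i' j')"
      using W32_23_gram \<open>i' < 32\<close> \<open>j' < 32\<close> by simp
    finally have "(\<Sum>l<32. x * W32_23 i' l * genIW l j) = x * delta i' j' + 3 * (- 8 * x * delta i' j')"
      using sum_genIW(2)[of j "\<lambda>l. x * W32_23 i' l"] False unfolding j'_def by simp
    moreover have "frame_block 32 3 W32_23 Y x y a i j = x * delta i' j' + 3 * (- Y i' j')"
      using assms False unfolding frame_block_def block_def i'_def j'_def by simp
    ultimately show ?thesis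
      unfolding i'_def by (simp only: mod_mult_self2)
  qed
qed

lemma frame_block_row_in_C3_W:
  assumes "i < 64" and xy: "x mod 3 = y mod 3"
  shows "(\<lambda>j. if j < 64 then frame_block 32 3 W32_23 Y x y a i j mod 3 else 0) \<in> C3_W"
proof -
  have "3 dvd y - x"
    using xy[symmetric] by (simp add: mod_eq_dvd_iff)
  then obtain q where "y - x = 3 * q" by (elim dvdE)
  then have y: "y = x + 3 * q" by simp
  show ?thesis
  proof (cases "i < 32")
    case True
    then show ?thesis
      unfolding C3_W_def
      by (intro code_genI[where u = "\<lambda>l. x * delta i l"]) (simp add: frame_block_top_row_mod3[OF _ y])
  next
    case False
    then show ?thesis
      unfolding C3_W_def
      by (intro code_genI[where u = "\<lambda>l. x * W32_23 (i - 32) l"])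
        (simp add: frame_block_bottom_row_mod3[OF _ \<open>i < 64\<close> _ y])
  qed
qed

lemma has_frame_constrA_of_int_rows:
  fixes X :: "nat \<Rightarrow> nat \<Rightarrow> int" and k t :: int
  assumes "0 < k"
    and rows: "\<forall>i<N. (\<lambda>j. if j < N then X i j mod k else 0) \<in> C"
    and gram: "\<forall>i<N. \<forall>j<N. row_gram N X X i j = k * t * delta i j"
  shows "has_frame N (constrA k N C) (of_int t)"
proof -
  define f where "f i j = (if j < N then of_int (X i j) / sqrt (of_int k) else 0)" for i j
  have "f i \<in> constrA k N C" if "i < N" for i
    unfolding constrA_def
  proof (intro CollectI bexI[OF _ rows[rule_format, OF that]] exI[of _ "\<lambda>j. X i j div k"] conjI allI impI)
    fix j assume "j < N"
    have "of_int (X i j mod k) + of_int k * of_int (X i j div k) = (of_int (X i j) :: real)"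
      by (metis of_int_add of_int_mult mod_mult_div_eq)
    with \<open>j < N\<close> show "f i j = (of_int (if j < N then X i j mod k else 0) + of_int k * of_int (X i j div k))
        / sqrt (of_int k)"
      unfolding f_def by simp
  qed (simp add: f_def)
  moreover have "inner_N N (f i) (f j) = (if i = j then of_int t else 0)" if "i < N" "j < N" for i j
  proof -
    have "inner_N N (f i) (f j) = of_int (row_gram N X X i j) / of_int k"
      using \<open>0 < k\<close> by (simp add: inner_N_def row_gram_def f_def sum_divide_distrib)
    also have "\<dots> = (if i = j then of_int t else 0)"
      using gram that \<open>0 < k\<close> by (simp add: delta_def)
    finally show ?thesis .
  qed
  ultimately show ?thesis
    unfolding has_frame_def by blast
qed

lemma three_times_representation:
  fixes k :: nat
  assumes "3 \<le> k" "k \<notin> {4, 5, 7, 10}"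
  shows "\<exists>x y m :: int. x mod 3 = y mod 3 \<and> 0 \<le> m \<and> 3 * int k = x\<^sup>2 + 23 * y\<^sup>2 + 9 * m"
proof -
  from assms have "3 dvd k \<or> (13 \<le> k \<and> 3 dvd k - 13) \<or> (8 \<le> k \<and> 3 dvd k - 8)"
    by simp presburger
  then obtain x y :: int and r :: nat
    where xy: "x mod 3 = y mod 3" and r: "x\<^sup>2 + 23 * y\<^sup>2 = 3 * int r" "r \<le> k" "3 dvd k - r"
  proof (elim disjE conjE)
    assume "3 dvd k"
    then show thesis by (intro that[of 0 0 0]) simp_all
  next
    assume "13 \<le> k" "3 dvd k - 13"
    then show thesis by (intro that[of 4 1 13]) simp_all
  next
    assume "8 \<le> k" "3 dvd k - 8"
    then show thesis by (intro that[of 1 1 8]) simp_all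
  qed
  from r(2,3) have "int k = int r + 3 * int ((k - r) div 3)"
    by (metis dvd_mult_div_cancel le_add_diff_inverse of_nat_add of_nat_mult of_nat_numeral)
  with xy r(1) show ?thesis
    by (intro exI[of _ x] exI[of _ y] exI[of _ "int ((k - r) div 3)"]) auto
qed

theorem lemma7p1:
  fixes k :: nat
  assumes "k \<ge> 3"
    and "\<not> (\<exists>m1 m2 m3 m4 :: nat. k = 2 ^ m1 * 5 ^ m2 * 7 ^ m3 * 23 ^ m4)"
  shows "has_frame 64 (constrA 3 64 C3_W) (real k)"
proof -
  have "(4::nat) = 2 ^ 2 * 5 ^ 0 * 7 ^ 0 * 23 ^ 0" "(5::nat) = 2 ^ 0 * 5 ^ 1 * 7 ^ 0 * 23 ^ 0"
    "(7::nat) = 2 ^ 0 * 5 ^ 0 * 7 ^ 1 * 23 ^ 0" "(10::nat) = 2 ^ 1 * 5 ^ 1 * 7 ^ 0 * 23 ^ 0"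
    by simp_all
  with assms(2) have "k \<notin> {4, 5, 7, 10}" by blast
  then obtain x y m :: int where xy: "x mod 3 = y mod 3" and "0 \<le> m"
    and norm: "3 * int k = x\<^sup>2 + 23 * y\<^sup>2 + 9 * m"
    using three_times_representation assms(1) by blast
  obtain a c d e where "m = a\<^sup>2 + c\<^sup>2 + d\<^sup>2 + e\<^sup>2"
    using four_squares_nat[of "nat m"] \<open>0 \<le> m\<close> unfolding four_squares_def by auto
  with norm have "x\<^sup>2 + 23 * y\<^sup>2 + 9 * (a\<^sup>2 + c\<^sup>2 + d\<^sup>2 + e\<^sup>2) = 3 * int k" by simp
  then have "has_frame 64 (constrA 3 64 C3_W) (of_int (int k))"
    using row_gram_frame_W32_23[of _ _ c d e x y a] frame_block_row_in_C3_W[OF _ xy]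
    by (intro has_frame_constrA_of_int_rows) auto
  then show ?thesis by simp
qed

end
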